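(* Let $\lambda_1\ge\lambda_2\ge\lambda_3>\lambda_4=0$ with $\lambda_1+\lambda_2+\lambda_3=1$, and let $$\rho_{\vec\lambda}=\lambda_1\Phi_1+\lambda_2|01\rangle\langle01|+\lambda_3\Phi_2,\qquad \sigma_{\vec\lambda}=\lambda_1\Phi_1+\lambda_2\Phi_2+\lambda_3\Phi_3.$$ If $2\lambda_1-\lambda_2>1$ and $\lambda_2>\lambda_3$, then there exists no non-entangling map $\Lambda:\mathcal{D}\to\mathcal{D}$ such that $\Lambda(\rho_{\vec\lambda})=\sigma_{\vec\lambda}$.
   Context: $\mathcal{D}$ is the set of two-qubit density matrices on $\mathbb{C}^2\otimes\mathbb{C}^2$ (Hermitian, positive semidefinite, trace one $4\times4$ matrices), written in the computational basis $\{|ij\rangle\}_{i,j\in\{0,1\}}$. The Bell vectors are $|\Phi_1\rangle=\frac{1}{\sqrt2}(|00\rangle+|11\rangle)$, $|\Phi_2\rangle=\frac{1}{\sqrt2}(|00\rangle-|11\rangle)$, $|\Phi_3\rangle=\frac{1}{\sqrt2}(|10\rangle+|01\rangle)$, $|\Phi_4\rangle=\frac{1}{\sqrt2}(|10\rangle-|01\rangle)$, and $\Phi_i=|\Phi_i\rangle\langle\Phi_i|$. A state is separable if it is a convex combination of product states $|\phi\rangle\langle\phi|\otimes|\chi\rangle\langle\chi|$. A map $\Lambda:\mathcal{D}\to\mathcal{D}$ is non-entangling (NE) if it is completely positive and trace preserving and maps every separable state to a separable state. *)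

theory Defs
  imports "Jordan_Normal_Form.Matrix"
begin

text \<open>Two-qubit operators are 4x4 complex matrices (JNF type complex mat) in the
computational basis; the basis vector |ij> has index 2*i + j (i, j in {0,1}).
Vectors are given as functions nat => complex (only indices below the dimension matter).\<close>

definition psd :: "nat \<Rightarrow> complex mat \<Rightarrow> bool" where
  "psd n A \<longleftrightarrow> A \<in> carrier_mat n n
     \<and> (\<forall>i<n. \<forall>j<n. A $$ (i,j) = cnj (A $$ (j,i)))
     \<and> (\<forall>v :: nat \<Rightarrow> complex.
          Im (\<Sum>i<n. \<Sum>j<n. cnj (v i) * A $$ (i,j) * v j) = 0
        \<and> Re (\<Sum>i<n. \<Sum>j<n. cnj (v i) * A $$ (i,j) * v j) \<ge> 0)"

definition tr :: "nat \<Rightarrow> complex mat \<Rightarrow> complex" where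
  "tr n A = (\<Sum>i<n. A $$ (i,i))"

definition density :: "complex mat \<Rightarrow> bool" where
  "density \<rho> \<longleftrightarrow> psd 4 \<rho> \<and> tr 4 \<rho> = 1"

definition proj4 :: "(nat \<Rightarrow> complex) \<Rightarrow> complex mat" where
  "proj4 v = mat 4 4 (\<lambda>(i,j). v i * cnj (v j))"

definition tensor_vec :: "(nat \<Rightarrow> complex) \<Rightarrow> (nat \<Rightarrow> complex) \<Rightarrow> nat \<Rightarrow> complex" where
  "tensor_vec \<phi> \<chi> = (\<lambda>k. \<phi> (k div 2) * \<chi> (k mod 2))"

definition unit2 :: "(nat \<Rightarrow> complex) \<Rightarrow> bool" where
  "unit2 \<phi> \<longleftrightarrow> (cmod (\<phi> 0))\<^sup>2 + (cmod (\<phi> 1))\<^sup>2 = 1"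

text \<open>Product state |phi><phi| (x) |chi><chi| = |phi (x) chi><phi (x) chi|.\<close>
definition product_state :: "(nat \<Rightarrow> complex) \<Rightarrow> (nat \<Rightarrow> complex) \<Rightarrow> complex mat" where
  "product_state \<phi> \<chi> = proj4 (tensor_vec \<phi> \<chi>)"

definition separable :: "complex mat \<Rightarrow> bool" where
  "separable \<rho> \<longleftrightarrow> (\<exists>(m::nat) (p :: nat \<Rightarrow> real) \<phi> \<chi>.
      (\<forall>k<m. p k \<ge> 0 \<and> unit2 (\<phi> k) \<and> unit2 (\<chi> k)) \<and> (\<Sum>k<m. p k) = 1 \<and>
      \<rho> = mat 4 4 (\<lambda>(i,j). \<Sum>k<m. complex_of_real (p k) * product_state (\<phi> k) (\<chi> k) $$ (i,j)))"

definition linear_map4 :: "(complex mat \<Rightarrow> complex mat) \<Rightarrow> bool" where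
  "linear_map4 \<Lambda> \<longleftrightarrow>
     (\<forall>A \<in> carrier_mat 4 4. \<Lambda> A \<in> carrier_mat 4 4) \<and>
     (\<forall>A \<in> carrier_mat 4 4. \<forall>B \<in> carrier_mat 4 4. \<Lambda> (A + B) = \<Lambda> A + \<Lambda> B) \<and>
     (\<forall>A \<in> carrier_mat 4 4. \<forall>c::complex. \<Lambda> (c \<cdot>\<^sub>m A) = c \<cdot>\<^sub>m \<Lambda> A)"

text \<open>(id_n (x) Lambda) applied to a (4n)x(4n) matrix, ancilla index a, system index i
  combined as 4*a + i.\<close>
definition ampliate :: "nat \<Rightarrow> (complex mat \<Rightarrow> complex mat) \<Rightarrow> complex mat \<Rightarrow> complex mat" where
  "ampliate n \<Lambda> M = mat (4*n) (4*n) (\<lambda>(r,c).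
      \<Lambda> (mat 4 4 (\<lambda>(i,j). M $$ (4 * (r div 4) + i, 4 * (c div 4) + j))) $$ (r mod 4, c mod 4))"

definition completely_positive :: "(complex mat \<Rightarrow> complex mat) \<Rightarrow> bool" where
  "completely_positive \<Lambda> \<longleftrightarrow>
     (\<forall>n M. psd (4*n) M \<longrightarrow> psd (4*n) (ampliate n \<Lambda> M))"

definition trace_preserving :: "(complex mat \<Rightarrow> complex mat) \<Rightarrow> bool" where
  "trace_preserving \<Lambda> \<longleftrightarrow> (\<forall>A \<in> carrier_mat 4 4. tr 4 (\<Lambda> A) = tr 4 A)"

definition CPTP :: "(complex mat \<Rightarrow> complex mat) \<Rightarrow> bool" where
  "CPTP \<Lambda> \<longleftrightarrow> linear_map4 \<Lambda> \<and> completely_positive \<Lambda> \<and> trace_preserving \<Lambda>"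

definition non_entangling :: "(complex mat \<Rightarrow> complex mat) \<Rightarrow> bool" where
  "non_entangling \<Lambda> \<longleftrightarrow> CPTP \<Lambda> \<and>
     (\<forall>\<rho>. density \<rho> \<and> separable \<rho> \<longrightarrow> separable (\<Lambda> \<rho>))"

definition Phi1 :: "nat \<Rightarrow> complex" where
  "Phi1 k = (if k = 0 \<or> k = 3 then complex_of_real (1 / sqrt 2) else 0)"
definition Phi2 :: "nat \<Rightarrow> complex" where
  "Phi2 k = (if k = 0 then complex_of_real (1 / sqrt 2)
             else if k = 3 then - complex_of_real (1 / sqrt 2) else 0)"
definition Phi3 :: "nat \<Rightarrow> complex" where
  "Phi3 k = (if k = 2 \<or> k = 1 then complex_of_real (1 / sqrt 2) else 0)"
definition ket01 :: "nat \<Rightarrow> complex" where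
  "ket01 k = (if k = 1 then 1 else 0)"

definition rho_lam :: "real \<Rightarrow> real \<Rightarrow> real \<Rightarrow> complex mat" where
  "rho_lam l1 l2 l3 = complex_of_real l1 \<cdot>\<^sub>m proj4 Phi1 + complex_of_real l2 \<cdot>\<^sub>m proj4 ket01
                      + complex_of_real l3 \<cdot>\<^sub>m proj4 Phi2"

definition sigma_lam :: "real \<Rightarrow> real \<Rightarrow> real \<Rightarrow> complex mat" where
  "sigma_lam l1 l2 l3 = complex_of_real l1 \<cdot>\<^sub>m proj4 Phi1 + complex_of_real l2 \<cdot>\<^sub>m proj4 Phi2
                        + complex_of_real l3 \<cdot>\<^sub>m proj4 Phi3"

end

theory Submission
  imports Defs
begin

text \<open>
  A separable state has weight at most 1/2 on every Bell state, so a non-entangling map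
  \<open>\<Lambda>\<close> sends every product state to a state with Bell weights at most 1/2.
  Averaging the product vectors \<open>(a, \<mu> b) \<otimes> (c, cnj \<mu> d)\<close> over the phases
  \<open>\<mu> \<in> {1, \<i>, -1, -\<i>}\<close> leaves only the projector onto \<open>a c |00> + b d |11>\<close>
  together with multiples of \<open>|01><01|\<close> and \<open>|10><10|\<close>; by linearity this bounds
  the Bell weights of \<open>\<Lambda> \<Phi>\<^sub>1\<close> and \<open>\<Lambda> \<Phi>\<^sub>2\<close> against those of \<open>\<Lambda> |01><01|\<close>.

  Suppose \<open>\<Lambda> \<rho> = \<sigma>\<close>. Comparing \<open>\<Phi>\<^sub>1\<close>-weights, the condition
  \<open>\<lambda>\<^sub>1 > 2\<lambda>\<^sub>2 + \<lambda>\<^sub>3\<close> (equivalent to \<open>2\<lambda>\<^sub>1 - \<lambda>\<^sub>2 > 1\<close>) forces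
  \<open>\<Lambda> \<Phi>\<^sub>1\<close> to have \<open>\<Phi>\<^sub>1\<close>-weight 1. The \<open>\<Phi>\<^sub>2\<close>- and \<open>\<Phi>\<^sub>3\<close>-weights
  then force \<open>\<Lambda> |01><01|\<close> to have \<open>\<Phi>\<^sub>2\<close>-weight 1/2, which by the phase average
  caps the \<open>\<Phi>\<^sub>2\<close>-weight of \<open>\<Lambda> \<Phi>\<^sub>2\<close> at 1/2. Hence
  \<open>\<lambda>\<^sub>2 \<le> \<lambda>\<^sub>2/2 + \<lambda>\<^sub>3/2\<close>, i.e. \<open>\<lambda>\<^sub>2 \<le> \<lambda>\<^sub>3\<close>.
\<close>

lemma mat4_eqI:
  assumes "A \<in> carrier_mat 4 4" "B \<in> carrier_mat 4 4"
    and "\<And>i j. i \<in> {0,1,2,3} \<Longrightarrow> j \<in> {0,1,2,3} \<Longrightarrow> A $$ (i,j) = B $$ (i,j)"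
  shows "A = B"
  using assms by (intro eq_matI) (auto simp: less_Suc_eq numeral_eq_Suc)

lemma sum_lessThan_4: "(\<Sum>i<(4::nat). f i) = f 0 + f 1 + f 2 + f 3"
  by (simp add: eval_nat_numeral)

lemma proj4_carrier [simp]: "proj4 u \<in> carrier_mat 4 4"
  by (simp add: proj4_def)

lemma proj4_mult: "proj4 (\<lambda>k. c * u k) = complex_of_real ((cmod c)\<^sup>2) \<cdot>\<^sub>m proj4 u"
  by (auto simp: proj4_def complex_norm_square simp del: of_real_power)

definition qform :: "(nat \<Rightarrow> complex) \<Rightarrow> complex mat \<Rightarrow> complex" where
  "qform v M = (\<Sum>i<4. \<Sum>j<4. cnj (v i) * M $$ (i,j) * v j)"

definition inner4 :: "(nat \<Rightarrow> complex) \<Rightarrow> (nat \<Rightarrow> complex) \<Rightarrow> complex" where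
  "inner4 v u = (\<Sum>i<4. cnj (v i) * u i)"

lemma qform_add:
  "A \<in> carrier_mat 4 4 \<Longrightarrow> B \<in> carrier_mat 4 4 \<Longrightarrow> qform v (A + B) = qform v A + qform v B"
  unfolding qform_def by (simp add: sum.distrib[symmetric] ring_distribs)

lemma qform_smult: "A \<in> carrier_mat 4 4 \<Longrightarrow> qform v (c \<cdot>\<^sub>m A) = c * qform v A"
  unfolding qform_def by (simp add: sum_distrib_left mult_ac)

lemma qform_proj4: "qform v (proj4 u) = complex_of_real ((cmod (inner4 v u))\<^sup>2)"
proof -
  have "qform v (proj4 u) = (\<Sum>i<4. \<Sum>j<4. (cnj (v i) * u i) * cnj (cnj (v j) * u j))"
    unfolding qform_def proj4_def by (intro sum.cong refl) (simp add: mult_ac)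
  also have "\<dots> = inner4 v u * cnj (inner4 v u)"
    unfolding inner4_def cnj_sum sum_product by simp
  finally show ?thesis
    by (simp only: complex_norm_square)
qed

lemma qform_convex_sum:
  "qform v (mat 4 4 (\<lambda>(i,j). \<Sum>k<m. complex_of_real (p k) * P k $$ (i,j)))
   = (\<Sum>k<m. complex_of_real (p k) * qform v (P k))"
proof -
  have "qform v (mat 4 4 (\<lambda>(i,j). \<Sum>k<m. complex_of_real (p k) * P k $$ (i,j)))
     = (\<Sum>i<4. \<Sum>j<4. \<Sum>k<m. cnj (v i) * (complex_of_real (p k) * P k $$ (i,j)) * v j)"
    unfolding qform_def by (intro sum.cong refl) (simp add: sum_distrib_left sum_distrib_right)
  also have "\<dots> = (\<Sum>i<4. \<Sum>k<m. \<Sum>j<4. cnj (v i) * (complex_of_real (p k) * P k $$ (i,j)) * v j)"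
    by (intro sum.cong refl sum.swap)
  also have "\<dots> = (\<Sum>k<m. \<Sum>i<4. \<Sum>j<4. cnj (v i) * (complex_of_real (p k) * P k $$ (i,j)) * v j)"
    by (rule sum.swap)
  also have "\<dots> = (\<Sum>k<m. complex_of_real (p k) * qform v (P k))"
    unfolding qform_def by (intro sum.cong refl) (simp add: sum_distrib_left mult_ac)
  finally show ?thesis .
qed

lemma psd_qform: "psd 4 M \<Longrightarrow> Im (qform v M) = 0 \<and> 0 \<le> Re (qform v M)"
  unfolding psd_def qform_def by blast

lemma psd_proj4: "psd 4 (proj4 u)"
  unfolding psd_def
proof (intro conjI allI impI)
  fix i j :: nat assume "i < 4" "j < 4"
  then show "proj4 u $$ (i, j) = cnj (proj4 u $$ (j, i))" by (simp add: proj4_def)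
next
  fix v
  show "Im (\<Sum>i<4. \<Sum>j<4. cnj (v i) * proj4 u $$ (i, j) * v j) = 0"
    "0 \<le> Re (\<Sum>i<4. \<Sum>j<4. cnj (v i) * proj4 u $$ (i, j) * v j)"
    using qform_proj4[of v u] by (simp_all add: qform_def)
qed simp

lemma tr_proj4: "tr 4 (proj4 u) = complex_of_real (\<Sum>i<4. (cmod (u i))\<^sup>2)"
  unfolding tr_def proj4_def by (simp del: of_real_power add: complex_norm_square)

definition inv_sqrt2 :: complex where
  "inv_sqrt2 = complex_of_real (1 / sqrt 2)"

lemma inv_sqrt2_squared: "inv_sqrt2 * inv_sqrt2 = 1 / 2"
  unfolding inv_sqrt2_def by (simp flip: of_real_mult)

lemma inv_sqrt2_squared_mult [simp]: "inv_sqrt2 * (inv_sqrt2 * x) = x / 2"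
  by (simp add: mult.assoc [symmetric] inv_sqrt2_squared)

lemma cnj_inv_sqrt2 [simp]: "cnj inv_sqrt2 = inv_sqrt2"
  by (simp add: inv_sqrt2_def)

lemma cmod_inv_sqrt2_mult_sq: "(cmod (inv_sqrt2 * z))\<^sup>2 = (cmod z)\<^sup>2 / 2"
proof -
  have "(cmod inv_sqrt2)\<^sup>2 = 1 / 2"
    unfolding inv_sqrt2_def norm_of_real by (simp add: power_divide)
  then show ?thesis
    by (simp add: norm_mult power_mult_distrib)
qed

lemma Phi1_eq: "Phi1 k = (if k = 0 \<or> k = 3 then inv_sqrt2 else 0)"
  by (simp add: Phi1_def inv_sqrt2_def)

lemma Phi2_eq: "Phi2 k = (if k = 0 then inv_sqrt2 else if k = 3 then - inv_sqrt2 else 0)"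
  by (simp add: Phi2_def inv_sqrt2_def)

lemma Phi3_eq: "Phi3 k = (if k = 2 \<or> k = 1 then inv_sqrt2 else 0)"
  by (simp add: Phi3_def inv_sqrt2_def)

definition Phi4 :: "nat \<Rightarrow> complex" where
  "Phi4 k = (if k = 2 then inv_sqrt2 else if k = 1 then - inv_sqrt2 else 0)"

lemma qform_bell_basis_sum: "qform Phi1 Y + qform Phi2 Y + qform Phi3 Y + qform Phi4 Y = tr 4 Y"
  unfolding qform_def tr_def sum_lessThan_4 Phi1_eq Phi2_eq Phi3_eq Phi4_def by simp

lemma psd_qform_bell_sum_le:
  assumes "psd 4 Y"
  shows "Re (qform Phi1 Y) + Re (qform Phi2 Y) + Re (qform Phi3 Y) \<le> Re (tr 4 Y)"
proof -
  have "Re (qform Phi1 Y) + Re (qform Phi2 Y) + Re (qform Phi3 Y) + Re (qform Phi4 Y) = Re (tr 4 Y)"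
    by (simp flip: qform_bell_basis_sum)
  with psd_qform [OF assms, of Phi4] show ?thesis by linarith
qed

lemma inner4_bell:
  "inner4 Phi1 Phi1 = 1" "inner4 Phi1 Phi2 = 0" "inner4 Phi1 Phi3 = 0"
  "inner4 Phi2 Phi1 = 0" "inner4 Phi2 Phi2 = 1" "inner4 Phi2 Phi3 = 0"
  "inner4 Phi3 Phi1 = 0" "inner4 Phi3 Phi2 = 0" "inner4 Phi3 Phi3 = 1"
  by (simp_all add: inner4_def sum_lessThan_4 Phi1_eq Phi2_eq Phi3_eq inv_sqrt2_squared)

lemma tr_proj4_bell: "tr 4 (proj4 Phi1) = 1" "tr 4 (proj4 Phi2) = 1"
  by (simp_all add: tr_def proj4_def sum_lessThan_4 Phi1_eq Phi2_eq inv_sqrt2_squared)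

definition sqnorm2 :: "(nat \<Rightarrow> complex) \<Rightarrow> real" where
  "sqnorm2 f = (cmod (f 0))\<^sup>2 + (cmod (f 1))\<^sup>2"

lemma unit2_iff_sqnorm2: "unit2 f \<longleftrightarrow> sqnorm2 f = 1"
  by (simp add: unit2_def sqnorm2_def)

lemma cmod_mult_add_mult_sq_le:
  "(cmod (a * b + c * d))\<^sup>2 \<le> ((cmod a)\<^sup>2 + (cmod c)\<^sup>2) * ((cmod b)\<^sup>2 + (cmod d)\<^sup>2)"
proof -
  have "cmod (a * b + c * d) \<le> cmod a * cmod b + cmod c * cmod d"
    by (metis norm_mult norm_triangle_ineq)
  then have "(cmod (a * b + c * d))\<^sup>2 \<le> (cmod a * cmod b + cmod c * cmod d)\<^sup>2"
    by (simp add: power_mono)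
  also have "\<dots> \<le> ((cmod a)\<^sup>2 + (cmod c)\<^sup>2) * ((cmod b)\<^sup>2 + (cmod d)\<^sup>2)"
    using sum_squares_ge_zero [of "cmod a * cmod d - cmod c * cmod b" 0]
    by (simp add: power2_eq_square algebra_simps)
  finally show ?thesis .
qed

lemma bell_inner4_tensor_sq_le:
  assumes "v \<in> {Phi1, Phi2, Phi3}"
  shows "(cmod (inner4 v (tensor_vec f g)))\<^sup>2 \<le> sqnorm2 f * sqnorm2 g / 2"
proof -
  have "inner4 Phi1 (tensor_vec f g) = inv_sqrt2 * (f 0 * g 0 + f 1 * g 1)"
    "inner4 Phi2 (tensor_vec f g) = inv_sqrt2 * (f 0 * g 0 + (- f 1) * g 1)"
    "inner4 Phi3 (tensor_vec f g) = inv_sqrt2 * (f 1 * g 0 + f 0 * g 1)"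
    unfolding inner4_def sum_lessThan_4 Phi1_eq Phi2_eq Phi3_eq tensor_vec_def
    by (simp_all add: algebra_simps)
  with assms show ?thesis
    using cmod_mult_add_mult_sq_le [of "f 0" "g 0" "f 1" "g 1"]
      cmod_mult_add_mult_sq_le [of "f 0" "g 0" "- f 1" "g 1"]
      cmod_mult_add_mult_sq_le [of "f 1" "g 0" "f 0" "g 1"]
    by (auto simp: cmod_inv_sqrt2_mult_sq sqnorm2_def add.commute)
qed

lemma separable_qform_bell_le:
  assumes "separable Y" "v \<in> {Phi1, Phi2, Phi3}"
  shows "Re (qform v Y) \<le> 1 / 2"
proof -
  obtain m :: nat and p \<phi> \<chi> where
    weights: "\<forall>k<m. p k \<ge> 0 \<and> unit2 (\<phi> k) \<and> unit2 (\<chi> k)" "(\<Sum>k<m. p k) = 1"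
    and Y: "Y = mat 4 4 (\<lambda>(i,j). \<Sum>k<m. complex_of_real (p k) * product_state (\<phi> k) (\<chi> k) $$ (i,j))"
    using assms(1) unfolding separable_def by blast
  have "Re (qform v Y) = (\<Sum>k<m. p k * (cmod (inner4 v (tensor_vec (\<phi> k) (\<chi> k))))\<^sup>2)"
    unfolding Y qform_convex_sum product_state_def qform_proj4 by simp
  also have "\<dots> \<le> (\<Sum>k<m. p k * (1 / 2))"
  proof (intro sum_mono mult_left_mono)
    fix k assume "k \<in> {..<m}"
    with weights(1) bell_inner4_tensor_sq_le [OF assms(2), of "\<phi> k" "\<chi> k"]
    show "(cmod (inner4 v (tensor_vec (\<phi> k) (\<chi> k))))\<^sup>2 \<le> 1 / 2" "0 \<le> p k"
      by (auto simp: unit2_iff_sqnorm2)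
  qed
  also have "\<dots> = 1 / 2"
    by (subst sum_distrib_right [symmetric]) (simp add: weights(2))
  finally show ?thesis .
qed

lemma product_state_density:
  assumes "unit2 f" "unit2 g"
  shows "density (product_state f g)"
proof -
  have "(\<Sum>i<4. (cmod (tensor_vec f g i))\<^sup>2) = sqnorm2 f * sqnorm2 g"
    unfolding sum_lessThan_4 tensor_vec_def sqnorm2_def
    by (simp add: norm_mult algebra_simps)
  with assms show ?thesis
    unfolding density_def product_state_def
    by (simp add: psd_proj4 tr_proj4 unit2_iff_sqnorm2)
qed

lemma product_state_separable:
  assumes "unit2 f" "unit2 g"
  shows "separable (product_state f g)"
  unfolding separable_def
  by (rule exI [of _ 1], rule exI [of _ "\<lambda>_. 1"], rule exI [of _ "\<lambda>_. f"], rule exI [of _ "\<lambda>_. g"])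
    (use assms in \<open>auto simp: product_state_def proj4_def\<close>)

lemma ampliate_1:
  assumes "X \<in> carrier_mat 4 4" "\<Lambda> X \<in> carrier_mat 4 4"
  shows "ampliate 1 \<Lambda> X = \<Lambda> X"
proof -
  have "mat 4 4 (\<lambda>(a,b). X $$ (4 * (i div 4) + a, 4 * (j div 4) + b)) = X"
    if "i < 4" "j < 4" for i j :: nat
    using that assms(1) by (intro eq_matI) auto
  moreover have "mat 4 4 (($$) X) = X"
    using assms(1) by (intro eq_matI) auto
  ultimately show ?thesis
    using assms(2) by (intro eq_matI) (auto simp: ampliate_def)
qed

lemma proj4_tensor_normalize:
  assumes "sqnorm2 a > 0" "sqnorm2 b > 0"
  shows "proj4 (tensor_vec a b) = complex_of_real (sqnorm2 a * sqnorm2 b) \<cdot>\<^sub>m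
    product_state (\<lambda>k. a k / sqrt (sqnorm2 a)) (\<lambda>k. b k / sqrt (sqnorm2 b))"
    and "unit2 (\<lambda>k. a k / sqrt (sqnorm2 a))"
proof -
  let ?na = "sqrt (sqnorm2 a)" and ?nb = "sqrt (sqnorm2 b)"
  define c where "c = complex_of_real (?na * ?nb)"
  have "tensor_vec a b = (\<lambda>k. c * tensor_vec (\<lambda>k. a k / ?na) (\<lambda>k. b k / ?nb) k)"
    using assms by (auto simp: c_def tensor_vec_def field_simps)
  moreover have "(cmod c)\<^sup>2 = sqnorm2 a * sqnorm2 b"
    using assms by (simp add: c_def norm_mult power_mult_distrib)
  ultimately show "proj4 (tensor_vec a b) = complex_of_real (sqnorm2 a * sqnorm2 b) \<cdot>\<^sub>m
    product_state (\<lambda>k. a k / ?na) (\<lambda>k. b k / ?nb)"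
    by (simp only: proj4_mult product_state_def)
  show "unit2 (\<lambda>k. a k / ?na)"
    using assms(1) unfolding unit2_def sqnorm2_def
    by (auto simp: norm_divide power_divide simp flip: add_divide_distrib)
qed

definition vec2 :: "complex \<Rightarrow> complex \<Rightarrow> nat \<Rightarrow> complex" where
  "vec2 x y = (\<lambda>k. if k = 0 then x else y)"

lemma vec2_simps [simp]: "vec2 x y 0 = x" "vec2 x y (Suc 0) = y" "vec2 x y 1 = y"
  by (auto simp: vec2_def)

lemma sqnorm2_vec2 [simp]: "sqnorm2 (vec2 x y) = (cmod x)\<^sup>2 + (cmod y)\<^sup>2"
  by (simp add: sqnorm2_def)

definition vec00_11 :: "complex \<Rightarrow> complex \<Rightarrow> nat \<Rightarrow> complex" where
  "vec00_11 x y k = (if k = 0 then x else if k = 3 then y else 0)"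

definition ket10 :: "nat \<Rightarrow> complex" where
  "ket10 k = (if k = 2 then 1 else 0)"

lemma proj4_product_basis:
  "proj4 (vec00_11 1 0) = proj4 (tensor_vec (vec2 1 0) (vec2 1 0))"
  "proj4 (vec00_11 0 1) = proj4 (tensor_vec (vec2 0 1) (vec2 0 1))"
  "proj4 ket01 = proj4 (tensor_vec (vec2 1 0) (vec2 0 1))"
  by (rule mat4_eqI; auto simp: proj4_def vec00_11_def ket01_def tensor_vec_def)+

lemma proj4_vec00_11_Phi1:
  "proj4 (vec00_11 x x) = complex_of_real (2 * (cmod x)\<^sup>2) \<cdot>\<^sub>m proj4 Phi1"
  by (rule mat4_eqI) (auto simp: proj4_def vec00_11_def Phi1_eq complex_norm_square
      inv_sqrt2_squared simp del: of_real_power)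

lemma proj4_vec00_11_Phi2:
  "proj4 (vec00_11 (- x) x) = complex_of_real (2 * (cmod x)\<^sup>2) \<cdot>\<^sub>m proj4 Phi2"
  by (rule mat4_eqI) (auto simp: proj4_def vec00_11_def Phi2_eq complex_norm_square
      inv_sqrt2_squared simp del: of_real_power)

lemma proj4_00_add_11: "proj4 (vec00_11 1 0) + proj4 (vec00_11 0 1) = proj4 Phi1 + proj4 Phi2"
  by (rule mat4_eqI) (auto simp: proj4_def vec00_11_def Phi1_eq Phi2_eq inv_sqrt2_squared)

definition twisted_product ::
    "complex \<Rightarrow> complex \<Rightarrow> complex \<Rightarrow> complex \<Rightarrow> complex \<Rightarrow> complex mat" where
  "twisted_product a b c d \<mu> = proj4 (tensor_vec (vec2 a (\<mu> * b)) (vec2 c (cnj \<mu> * d)))"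

lemma twisted_product_carrier [simp]: "twisted_product a b c d \<mu> \<in> carrier_mat 4 4"
  by (simp add: twisted_product_def)

lemma phase_twirl:
  "twisted_product a b c d 1 + twisted_product a b c d \<i>
     + twisted_product a b c d (-1) + twisted_product a b c d (-\<i>)
   = 4 \<cdot>\<^sub>m proj4 (vec00_11 (a * c) (b * d))
     + complex_of_real (4 * (cmod (a * d))\<^sup>2) \<cdot>\<^sub>m proj4 ket01
     + complex_of_real (4 * (cmod (b * c))\<^sup>2) \<cdot>\<^sub>m proj4 ket10"
  by (rule mat4_eqI) (auto simp: twisted_product_def proj4_def tensor_vec_def vec00_11_def
      ket01_def ket10_def complex_norm_square algebra_simps simp del: of_real_power)

locale non_entangling_map =
  fixes \<Lambda> :: "complex mat \<Rightarrow> complex mat"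
  assumes non_entangling: "non_entangling \<Lambda>"
begin

abbreviation overlap :: "complex mat \<Rightarrow> (nat \<Rightarrow> complex) \<Rightarrow> real" where
  "overlap M v \<equiv> Re (qform v (\<Lambda> M))"

lemma linear: "linear_map4 \<Lambda>"
  using non_entangling by (simp add: non_entangling_def CPTP_def)

lemma overlap_add:
  "A \<in> carrier_mat 4 4 \<Longrightarrow> B \<in> carrier_mat 4 4 \<Longrightarrow> overlap (A + B) v = overlap A v + overlap B v"
  using linear by (simp add: linear_map4_def qform_add)

lemma overlap_smult:
  "A \<in> carrier_mat 4 4 \<Longrightarrow> Im c = 0 \<Longrightarrow> overlap (c \<cdot>\<^sub>m A) v = Re c * overlap A v"
  using linear by (simp add: linear_map4_def qform_smult)

lemma psd_image:
  assumes "psd 4 X"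
  shows "psd 4 (\<Lambda> X)"
proof -
  have X: "X \<in> carrier_mat 4 4"
    using assms by (simp add: psd_def)
  have "psd (4 * 1) X \<longrightarrow> psd (4 * 1) (ampliate 1 \<Lambda> X)"
    using non_entangling unfolding non_entangling_def CPTP_def completely_positive_def by blast
  then have "psd 4 (ampliate 1 \<Lambda> X)"
    using assms by simp
  moreover have "\<Lambda> X \<in> carrier_mat 4 4"
    using X linear by (simp add: linear_map4_def)
  ultimately show ?thesis
    using ampliate_1 [OF X] by simp
qed

lemma overlap_nonneg: "0 \<le> overlap (proj4 u) v"
  using psd_qform [OF psd_image [OF psd_proj4]] by blast

lemma overlap_bell_sum_le:
  assumes "tr 4 (proj4 u) = 1"
  shows "overlap (proj4 u) Phi1 + overlap (proj4 u) Phi2 + overlap (proj4 u) Phi3 \<le> 1"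
proof -
  have "tr 4 (\<Lambda> (proj4 u)) = 1"
    using non_entangling assms by (simp add: non_entangling_def CPTP_def trace_preserving_def)
  then show ?thesis
    using psd_qform_bell_sum_le [OF psd_image [OF psd_proj4 [of u]]] by simp
qed

lemma overlap_product_le:
  assumes "v \<in> {Phi1, Phi2, Phi3}" "sqnorm2 a > 0" "sqnorm2 b > 0"
  shows "overlap (proj4 (tensor_vec a b)) v \<le> sqnorm2 a * sqnorm2 b / 2"
proof -
  let ?\<phi> = "\<lambda>k. a k / sqrt (sqnorm2 a)" and ?\<chi> = "\<lambda>k. b k / sqrt (sqnorm2 b)"
  have "unit2 ?\<phi>" "unit2 ?\<chi>"
    using assms by (simp_all add: proj4_tensor_normalize(2))
  then have "separable (\<Lambda> (product_state ?\<phi> ?\<chi>))"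
    using non_entangling product_state_density product_state_separable
    by (simp add: non_entangling_def)
  then have "overlap (product_state ?\<phi> ?\<chi>) v \<le> 1 / 2"
    using assms(1) by (rule separable_qform_bell_le)
  moreover have "overlap (proj4 (tensor_vec a b)) v
      = sqnorm2 a * sqnorm2 b * overlap (product_state ?\<phi> ?\<chi>) v"
    unfolding proj4_tensor_normalize(1) [OF assms(2,3)]
    by (simp add: overlap_smult product_state_def)
  ultimately show ?thesis
    using assms by (simp add: mult_left_mono)
qed

lemma overlap_twisted_product_le:
  assumes "v \<in> {Phi1, Phi2, Phi3}" "cmod \<mu> = 1"
    and "(cmod a)\<^sup>2 + (cmod b)\<^sup>2 > 0" "(cmod c)\<^sup>2 + (cmod d)\<^sup>2 > 0"
  shows "overlap (twisted_product a b c d \<mu>) v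
    \<le> ((cmod a)\<^sup>2 + (cmod b)\<^sup>2) * ((cmod c)\<^sup>2 + (cmod d)\<^sup>2) / 2"
  using overlap_product_le [OF assms(1), of "vec2 a (\<mu> * b)" "vec2 c (cnj \<mu> * d)"] assms
  by (simp add: twisted_product_def norm_mult)

lemma overlap_twirl_le:
  assumes "v \<in> {Phi1, Phi2, Phi3}"
    and "(cmod a)\<^sup>2 + (cmod b)\<^sup>2 > 0" "(cmod c)\<^sup>2 + (cmod d)\<^sup>2 > 0"
  shows "4 * overlap (proj4 (vec00_11 (a * c) (b * d))) v
      + 4 * (cmod (a * d))\<^sup>2 * overlap (proj4 ket01) v
      + 4 * (cmod (b * c))\<^sup>2 * overlap (proj4 ket10) v
    \<le> 2 * ((cmod a)\<^sup>2 + (cmod b)\<^sup>2) * ((cmod c)\<^sup>2 + (cmod d)\<^sup>2)"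
proof -
  let ?T = "twisted_product a b c d"
  have "4 * overlap (proj4 (vec00_11 (a * c) (b * d))) v
      + 4 * (cmod (a * d))\<^sup>2 * overlap (proj4 ket01) v
      + 4 * (cmod (b * c))\<^sup>2 * overlap (proj4 ket10) v
    = overlap (?T 1 + ?T \<i> + ?T (-1) + ?T (-\<i>)) v"
    unfolding phase_twirl
    by (simp add: overlap_add overlap_smult)
  also have "\<dots> = overlap (?T 1) v + overlap (?T \<i>) v + overlap (?T (-1)) v + overlap (?T (-\<i>)) v"
    by (simp add: overlap_add)
  also have "\<dots> \<le> 4 * (((cmod a)\<^sup>2 + (cmod b)\<^sup>2) * ((cmod c)\<^sup>2 + (cmod d)\<^sup>2) / 2)"
  proof -
    have "overlap (?T \<mu>) v \<le> ((cmod a)\<^sup>2 + (cmod b)\<^sup>2) * ((cmod c)\<^sup>2 + (cmod d)\<^sup>2) / 2"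
      if "cmod \<mu> = 1" for \<mu>
      using overlap_twisted_product_le [OF assms(1) that assms(2,3)] .
    from this [of 1] this [of \<i>] this [of "-1"] this [of "-\<i>"] show ?thesis
      by simp
  qed
  finally show ?thesis by (simp add: algebra_simps)
qed

lemma overlap_Phi1_Phi2_le: "overlap (proj4 Phi1) Phi1 + overlap (proj4 Phi2) Phi1 \<le> 1"
proof -
  have "overlap (proj4 Phi1) Phi1 + overlap (proj4 Phi2) Phi1
      = overlap (proj4 (vec00_11 1 0)) Phi1 + overlap (proj4 (vec00_11 0 1)) Phi1"
    by (metis proj4_00_add_11 overlap_add proj4_carrier)
  also have "\<dots> \<le> 1 / 2 + 1 / 2"
    unfolding proj4_product_basis
    by (intro add_mono order.trans [OF overlap_product_le]) auto
  finally show ?thesis by simp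
qed

lemma overlap_Phi2_Phi2_le:
  assumes "1 / 2 \<le> overlap (proj4 ket01) Phi2"
  shows "overlap (proj4 Phi2) Phi2 \<le> 1 / 2"
proof (rule ccontr)
  let ?w = "overlap (proj4 Phi2) Phi2"
  assume "\<not> ?w \<le> 1 / 2"
  define s where "s = sqrt (2 * ?w - 1)"
  \<comment> \<open>for this \<open>s\<close> the twirl bound below reads \<open>4 w \<le> 2 + s\<^sup>2 = 1 + 2 w\<close>\<close>
  have s: "s\<^sup>2 = 2 * ?w - 1" "s\<^sup>2 > 0"
    using \<open>\<not> ?w \<le> 1 / 2\<close> by (simp_all add: s_def)
  have "4 * (2 * s\<^sup>2 * ?w) + 4 * overlap (proj4 ket01) Phi2 + 4 * s ^ 4 * overlap (proj4 ket10) Phi2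
      \<le> 2 * (1 + s\<^sup>2) * (s\<^sup>2 + 1)"
    using overlap_twirl_le [of Phi2 1 "complex_of_real s" "- complex_of_real s" 1] s(2)
    by (simp add: proj4_vec00_11_Phi2 overlap_smult norm_mult power_mult_distrib
        flip: power4_eq_xxxx)
  moreover have "0 \<le> s ^ 4 * overlap (proj4 ket10) Phi2"
    using overlap_nonneg by simp
  ultimately have "s\<^sup>2 * (8 * ?w) \<le> s\<^sup>2 * (4 + 2 * s\<^sup>2)"
    using assms by (simp add: algebra_simps power2_eq_square power4_eq_xxxx)
  then have "4 * ?w \<le> 2 + s\<^sup>2"
    using s(2) by simp
  with s(1) \<open>\<not> ?w \<le> 1 / 2\<close> show False
    by linarith
qed

end

lemma qform_sigma_lam:
  "Re (qform Phi1 (sigma_lam l1 l2 l3)) = l1"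
  "Re (qform Phi2 (sigma_lam l1 l2 l3)) = l2"
  "Re (qform Phi3 (sigma_lam l1 l2 l3)) = l3"
  unfolding sigma_lam_def by (simp_all add: qform_add qform_smult qform_proj4 inner4_bell)

locale rho_to_sigma = non_entangling_map +
  fixes l1 l2 l3 :: real
  assumes maps_rho_to_sigma: "\<Lambda> (rho_lam l1 l2 l3) = sigma_lam l1 l2 l3"
begin

lemma overlap_rho_lam:
  "l1 * overlap (proj4 Phi1) v + l2 * overlap (proj4 ket01) v + l3 * overlap (proj4 Phi2) v
    = Re (qform v (sigma_lam l1 l2 l3))"
  unfolding maps_rho_to_sigma [symmetric] rho_lam_def
  by (simp add: overlap_add overlap_smult)

lemma overlap_Phi1_Phi1:
  assumes "0 \<le> l2" "0 \<le> l3" "2 * l2 + l3 < l1"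
  shows "overlap (proj4 Phi1) Phi1 = 1"
proof -
  let ?u1 = "overlap (proj4 Phi1) Phi1" and ?u2 = "overlap (proj4 Phi2) Phi1"
    and ?e = "overlap (proj4 ket01) Phi1"
  define d where "d = 1 - ?u1"
  have "8 * ?u1 + 4 * ?e + 4 * overlap (proj4 ket10) Phi1 \<le> 8"
    using overlap_twirl_le [of Phi1 1 1 1 1] by (simp add: proj4_vec00_11_Phi1 overlap_smult)
  then have "?e \<le> 2 * d"
    using overlap_nonneg [of Phi1 ket10] by (simp add: d_def)
  then have "l2 * ?e \<le> l2 * (2 * d)"
    using assms(1) by (rule mult_left_mono)
  moreover have "l3 * ?u2 \<le> l3 * d"
    using overlap_Phi1_Phi2_le assms(2) by (intro mult_left_mono) (simp_all add: d_def)
  moreover have "l1 * d = l2 * ?e + l3 * ?u2"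
    using overlap_rho_lam [of Phi1] by (simp add: qform_sigma_lam d_def algebra_simps)
  ultimately have "(l1 - 2 * l2 - l3) * d \<le> 0"
    by (simp add: algebra_simps)
  then have "d \<le> 0"
    using assms(3) by (simp add: mult_le_0_iff)
  moreover have "0 \<le> d"
    using overlap_Phi1_Phi2_le overlap_nonneg [of Phi1 Phi2] by (simp add: d_def)
  ultimately show ?thesis
    by (simp add: d_def)
qed

lemma l2_le_l3:
  assumes "0 \<le> l2" "0 \<le> l3" "2 * l2 + l3 < l1"
  shows "l2 \<le> l3"
proof (rule ccontr)
  assume "\<not> l2 \<le> l3"
  then have "0 < l2"
    using assms(2) by linarith
  let ?f = "overlap (proj4 ket01) Phi2" and ?g = "overlap (proj4 ket01) Phi3"
    and ?v = "overlap (proj4 Phi2) Phi2" and ?w = "overlap (proj4 Phi2) Phi3"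
  have ket01_le: "overlap (proj4 ket01) v \<le> 1 / 2" if "v \<in> {Phi1, Phi2, Phi3}" for v
    using overlap_product_le [OF that, of "vec2 1 0" "vec2 0 1"] by (simp add: proj4_product_basis)
  have "overlap (proj4 Phi1) Phi2 = 0" "overlap (proj4 Phi1) Phi3 = 0"
    using overlap_bell_sum_le [OF tr_proj4_bell(1)] overlap_Phi1_Phi1 [OF assms]
      overlap_nonneg [of Phi2 Phi1] overlap_nonneg [of Phi3 Phi1] by linarith+
  then have rho2: "l2 * ?f + l3 * ?v = l2" and rho3: "l2 * ?g + l3 * ?w = l3"
    using overlap_rho_lam [of Phi2] overlap_rho_lam [of Phi3] by (simp_all add: qform_sigma_lam)
  have "?v + ?w \<le> 1"
    using overlap_bell_sum_le [OF tr_proj4_bell(2)] overlap_nonneg [of Phi1 Phi2] by linarith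
  then have "l3 * (?v + ?w) \<le> l3 * 1"
    using assms(2) by (rule mult_left_mono)
  with rho2 rho3 have "l2 * 1 \<le> l2 * (?f + ?g)"
    by (simp add: algebra_simps)
  then have "1 \<le> ?f + ?g"
    using \<open>0 < l2\<close> by (simp only: mult_le_cancel_left_pos)
  then have "1 / 2 \<le> ?f"
    using ket01_le [of Phi3] by simp
  then have "?v \<le> 1 / 2"
    by (rule overlap_Phi2_Phi2_le)
  then have "l3 * ?v \<le> l3 * (1 / 2)"
    using assms(2) by (rule mult_left_mono)
  moreover have "l2 * ?f \<le> l2 * (1 / 2)"
    using ket01_le [of Phi2] assms(1) by (intro mult_left_mono) simp_all
  ultimately show False
    using rho2 \<open>\<not> l2 \<le> l3\<close> by linarith
qed

end

theorem theorem5: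
  fixes l1 l2 l3 :: real
  assumes "l1 \<ge> l2" and "l2 \<ge> l3" and "l3 > 0" and "l1 + l2 + l3 = 1"
    and "2 * l1 - l2 > 1" and "l2 > l3"
  shows "\<not> (\<exists>\<Lambda>. non_entangling \<Lambda> \<and> \<Lambda> (rho_lam l1 l2 l3) = sigma_lam l1 l2 l3)"
proof
  assume "\<exists>\<Lambda>. non_entangling \<Lambda> \<and> \<Lambda> (rho_lam l1 l2 l3) = sigma_lam l1 l2 l3"
  then obtain \<Lambda> where "non_entangling \<Lambda>" "\<Lambda> (rho_lam l1 l2 l3) = sigma_lam l1 l2 l3"
    by blast
  then interpret rho_to_sigma \<Lambda> l1 l2 l3
    by unfold_locales
  have "2 * l2 + l3 < l1"
    using assms(4,5) by linarith
  then have "l2 \<le> l3"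
    using assms(2,3) by (intro l2_le_l3) auto
  with assms(6) show False
    by simp
qed

end
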